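(* Let $P$ be a finite poset and $R$ a consistent restriction function on $P$. Then the poset $\Gamma(P,R)$ is isomorphic to the dual of the poset of meet-irreducible elements of the lattice $\mathrm{Inc}^R(P)$ (with the order induced from $\mathrm{Inc}^R(P)$). Consequently, the order ideals of $\Gamma(P,R)$ are in bijection with $\mathrm{Inc}^R(P)$.
   Context: A restriction function on a finite poset $P$ assigns to each $p\in P$ a nonempty finite set $R(p)\subseteq\mathbb{Z}$. $\mathrm{Inc}^R(P)$ is the set of increasing labelings: functions $f:P\to\mathbb{Z}$ with $f(p)\in R(p)$ for all $p$ and $p_1<p_2\Rightarrow f(p_1)<f(p_2)$. It is partially ordered by $f\le g$ iff $f(p)\le g(p)$ for all $p$; this is a finite distributive lattice (meet and join are pointwise min and max). An element $x$ of a lattice is meet-irreducible if it is not the top element and $x=y\wedge z$ implies $x=y$ or $x=z$. $R$ is consistent if for every cover relation $x\lessdot y$ in $P$, $\min R(x)<\min R(y)$ and $\max R(x)<\max R(y)$. Write $R(p)^*=R(p)\setminus\{\max R(p)\}$, $R(p)_{>k}$ for the smallest element of $R(p)$ greater than $k$, and $R(p)_{<k}$ for the largest element of $R(p)$ less than $k$. $\Gamma(P,R)$ is the poset on the set $\{(p,k): p\in P,\ k\in R(p)^*\}$ whose order is the reflexive–transitive closure of the relation $(p_1,k_1)\lessdot(p_2,k_2)$ (the covering relations of $\Gamma(P,R)$), which holds iff either (1) $p_1=p_2$ and $R(p_1)_{>k_2}=k_1$; or (2) $p_1\lessdot p_2$ in $P$, $k_1=R(p_1)_{<k_2}$ (and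 $k_1\ne\max R(p_1)$), and there is no $k\in R(p_2)$ with $k>k_2$ and $R(p_1)_{<k}=k_1$. An order ideal of a poset is a downward-closed subset. *)

theory Defs
  imports "HOL-Library.FuncSet"
begin

definition poset_on :: "'a set \<Rightarrow> ('a \<Rightarrow> 'a \<Rightarrow> bool) \<Rightarrow> bool" where
  "poset_on P le \<longleftrightarrow>
     (\<forall>x\<in>P. le x x) \<and>
     (\<forall>x\<in>P. \<forall>y\<in>P. le x y \<and> le y x \<longrightarrow> x = y) \<and>
     (\<forall>x\<in>P. \<forall>y\<in>P. \<forall>z\<in>P. le x y \<and> le y z \<longrightarrow> le x z)"

definition covers :: "'a set \<Rightarrow> ('a \<Rightarrow> 'a \<Rightarrow> bool) \<Rightarrow> 'a \<Rightarrow> 'a \<Rightarrow> bool" where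
  "covers P le x y \<longleftrightarrow> x \<in> P \<and> y \<in> P \<and> le x y \<and> x \<noteq> y \<and>
     \<not> (\<exists>z\<in>P. le x z \<and> x \<noteq> z \<and> le z y \<and> z \<noteq> y)"

definition restriction_fun :: "'a set \<Rightarrow> ('a \<Rightarrow> int set) \<Rightarrow> bool" where
  "restriction_fun P R \<longleftrightarrow> (\<forall>p\<in>P. finite (R p) \<and> R p \<noteq> {})"

definition consistent :: "'a set \<Rightarrow> ('a \<Rightarrow> 'a \<Rightarrow> bool) \<Rightarrow> ('a \<Rightarrow> int set) \<Rightarrow> bool" where
  "consistent P le R \<longleftrightarrow>
     (\<forall>x y. covers P le x y \<longrightarrow> Min (R x) < Min (R y) \<and> Max (R x) < Max (R y))"

definition Inc :: "'a set \<Rightarrow> ('a \<Rightarrow> 'a \<Rightarrow> bool) \<Rightarrow> ('a \<Rightarrow> int set) \<Rightarrow> ('a \<Rightarrow> int) set" where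
  "Inc P le R = {f \<in> Pi\<^sub>E P R. \<forall>p1\<in>P. \<forall>p2\<in>P. le p1 p2 \<and> p1 \<noteq> p2 \<longrightarrow> f p1 < f p2}"

definition inc_le :: "'a set \<Rightarrow> ('a \<Rightarrow> int) \<Rightarrow> ('a \<Rightarrow> int) \<Rightarrow> bool" where
  "inc_le P f g \<longleftrightarrow> (\<forall>p\<in>P. f p \<le> g p)"

definition is_meet :: "'b set \<Rightarrow> ('b \<Rightarrow> 'b \<Rightarrow> bool) \<Rightarrow> 'b \<Rightarrow> 'b \<Rightarrow> 'b \<Rightarrow> bool" where
  "is_meet L le x y z \<longleftrightarrow> x \<in> L \<and> le x y \<and> le x z \<and>
     (\<forall>w\<in>L. le w y \<and> le w z \<longrightarrow> le w x)"

definition meet_irreducible :: "'b set \<Rightarrow> ('b \<Rightarrow> 'b \<Rightarrow> bool) \<Rightarrow> 'b \<Rightarrow> bool" where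
  "meet_irreducible L le x \<longleftrightarrow> x \<in> L \<and> (\<exists>y\<in>L. \<not> le y x) \<and>
     (\<forall>y\<in>L. \<forall>z\<in>L. is_meet L le x y z \<longrightarrow> x = y \<or> x = z)"

definition succ_in :: "int set \<Rightarrow> int \<Rightarrow> int" where
  "succ_in S k = Min {x \<in> S. k < x}"

definition pred_in :: "int set \<Rightarrow> int \<Rightarrow> int" where
  "pred_in S k = Max {x \<in> S. x < k}"

definition Gamma_set :: "'a set \<Rightarrow> ('a \<Rightarrow> int set) \<Rightarrow> ('a \<times> int) set" where
  "Gamma_set P R = {(p, k). p \<in> P \<and> k \<in> R p \<and> k \<noteq> Max (R p)}"

definition Gamma_cover :: "'a set \<Rightarrow> ('a \<Rightarrow> 'a \<Rightarrow> bool) \<Rightarrow> ('a \<Rightarrow> int set)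
    \<Rightarrow> 'a \<times> int \<Rightarrow> 'a \<times> int \<Rightarrow> bool" where
  "Gamma_cover P le R a b \<longleftrightarrow>
     a \<in> Gamma_set P R \<and> b \<in> Gamma_set P R \<and>
     (let (p1, k1) = a; (p2, k2) = b in
       (p1 = p2 \<and> succ_in (R p1) k2 = k1) \<or>
       (covers P le p1 p2 \<and> {x \<in> R p1. x < k2} \<noteq> {} \<and> k1 = pred_in (R p1) k2 \<and>
        k1 \<noteq> Max (R p1) \<and>
        \<not> (\<exists>k\<in>R p2. k > k2 \<and> pred_in (R p1) k = k1)))"

definition Gamma_le :: "'a set \<Rightarrow> ('a \<Rightarrow> 'a \<Rightarrow> bool) \<Rightarrow> ('a \<Rightarrow> int set)
    \<Rightarrow> 'a \<times> int \<Rightarrow> 'a \<times> int \<Rightarrow> bool" where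
  "Gamma_le P le R a b \<longleftrightarrow> a \<in> Gamma_set P R \<and> b \<in> Gamma_set P R \<and>
     (Gamma_cover P le R)\<^sup>*\<^sup>* a b"

definition order_ideals :: "'b set \<Rightarrow> ('b \<Rightarrow> 'b \<Rightarrow> bool) \<Rightarrow> 'b set set" where
  "order_ideals X le = {I. I \<subseteq> X \<and> (\<forall>a\<in>I. \<forall>b\<in>X. le b a \<longrightarrow> b \<in> I)}"

end

theory Submission
  imports Defs
begin

text \<open>
  Order ideals \<open>D\<close> of \<open>\<Gamma>(P,R)\<close> and increasing labelings correspond to each other:
  \<open>D\<close> gives the labeling whose value at \<open>q\<close> is the least \<open>k\<close> with \<open>(q,k) \<in> D\<close> (or
  \<open>max R(q)\<close> if there is none), and a labeling \<open>f\<close> gives the ideal \<open>{(q,k). f(q) \<le> k}\<close>. The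
  covering relations of \<open>\<Gamma>(P,R)\<close> are designed so that the first map produces
  increasing labelings and the second produces order ideals. The correspondence reverses
  inclusion, so the labeling \<open>\<phi>(b)\<close> of the principal ideal of \<open>b = (p,k)\<close> is the largest
  labeling with value at most \<open>k\<close> at \<open>p\<close>. Hence \<open>\<phi>\<close> reverses the order of \<open>\<Gamma>(P,R)\<close>,
  \<open>\<phi>(p,k)\<close> is meet-irreducible (if it is \<open>y \<and> z\<close>, then \<open>min (y p) (z p) \<le> k\<close> puts \<open>y\<close> or
  \<open>z\<close> below it), and every labeling \<open>m\<close> is the meet of the \<open>\<phi>(q, m q)\<close>, so a
  meet-irreducible labeling is one of them.
\<close>

lemma inc_le_refl: "inc_le P f f"
  by (simp add: inc_le_def)

lemma inc_le_trans: "inc_le P f g \<Longrightarrow> inc_le P g h \<Longrightarrow> inc_le P f h"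
  unfolding inc_le_def by (meson order_trans)

lemma Inc_in_R: "f \<in> Inc P le R \<Longrightarrow> q \<in> P \<Longrightarrow> f q \<in> R q"
  by (auto simp: Inc_def)

lemma Inc_less: "f \<in> Inc P le R \<Longrightarrow> x \<in> P \<Longrightarrow> y \<in> P \<Longrightarrow> le x y \<Longrightarrow> x \<noteq> y \<Longrightarrow> f x < f y"
  by (auto simp: Inc_def)

lemma Inc_undefined: "f \<in> Inc P le R \<Longrightarrow> q \<notin> P \<Longrightarrow> f q = undefined"
  by (auto simp: Inc_def)

lemma Inc_inc_le_antisym:
  assumes "f \<in> Inc P le R" "g \<in> Inc P le R" "inc_le P f g" "inc_le P g f"
  shows "f = g"
proof
  fix q show "f q = g q"
    using assms by (cases "q \<in> P") (auto simp: inc_le_def Inc_undefined intro: antisym)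
qed

lemma
  assumes "finite S" "x \<in> S" "k < x"
  shows succ_in_mem: "succ_in S k \<in> S" and succ_in_greater: "k < succ_in S k"
    and succ_in_le: "succ_in S k \<le> x"
proof -
  have "succ_in S k \<in> {y \<in> S. k < y}"
    unfolding succ_in_def using assms by (intro Min_in) auto
  then show "succ_in S k \<in> S" "k < succ_in S k" by auto
  show "succ_in S k \<le> x" using assms by (simp add: succ_in_def)
qed

lemma
  assumes "finite S" "x \<in> S" "x < k"
  shows pred_in_mem: "pred_in S k \<in> S" and pred_in_less: "pred_in S k < k"
    and pred_in_ge: "x \<le> pred_in S k"
proof -
  have "pred_in S k \<in> {y \<in> S. y < k}"
    unfolding pred_in_def using assms by (intro Max_in) auto
  then show "pred_in S k \<in> S" "pred_in S k < k" by auto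
  show "x \<le> pred_in S k" using assms by (simp add: pred_in_def)
qed

definition pointwise_Min :: "'a set \<Rightarrow> ('a \<Rightarrow> int) set \<Rightarrow> 'a \<Rightarrow> int" where
  "pointwise_Min P A = (\<lambda>q. if q \<in> P then Min ((\<lambda>f. f q) ` A) else undefined)"

lemma pointwise_Min_le: "finite A \<Longrightarrow> f \<in> A \<Longrightarrow> inc_le P (pointwise_Min P A) f"
  by (simp add: inc_le_def pointwise_Min_def)

lemma pointwise_Min_greatest:
  "finite A \<Longrightarrow> A \<noteq> {} \<Longrightarrow> (\<And>f. f \<in> A \<Longrightarrow> inc_le P g f) \<Longrightarrow> inc_le P g (pointwise_Min P A)"
  by (simp add: inc_le_def pointwise_Min_def)

lemma pointwise_Min_attained:
  assumes "finite A" "A \<noteq> {}" "q \<in> P"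
  obtains f where "f \<in> A" "pointwise_Min P A q = f q"
proof -
  have "Min ((\<lambda>f. f q) ` A) \<in> (\<lambda>f. f q) ` A" using assms by simp
  then show ?thesis using that assms(3) by (auto simp: pointwise_Min_def)
qed

lemma pointwise_Min_Inc:
  assumes A: "finite A" "A \<noteq> {}" "A \<subseteq> Inc P le R"
  shows "pointwise_Min P A \<in> Inc P le R"
  unfolding Inc_def
proof (intro CollectI conjI ballI impI PiE_I)
  fix q assume "q \<in> P"
  then obtain f where "f \<in> A" "pointwise_Min P A q = f q"
    using pointwise_Min_attained A by metis
  then show "pointwise_Min P A q \<in> R q" using A \<open>q \<in> P\<close> Inc_in_R by fastforce
next
  fix x y assume xy: "x \<in> P" "y \<in> P" "le x y \<and> x \<noteq> y"
  obtain f where f: "f \<in> A" "pointwise_Min P A y = f y"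
    using pointwise_Min_attained A xy(2) by metis
  have "pointwise_Min P A x \<le> f x"
    using pointwise_Min_le[OF A(1) f(1)] xy(1) by (simp add: inc_le_def)
  also have "f x < f y" using Inc_less[of f] f(1) A(3) xy by auto
  finally show "pointwise_Min P A x < pointwise_Min P A y" using f(2) by simp
qed (simp add: pointwise_Min_def)

lemma pointwise_Min_singleton: "f \<in> Inc P le R \<Longrightarrow> pointwise_Min P {f} = f"
  by (rule ext) (simp add: pointwise_Min_def Inc_undefined)

lemma pointwise_Min_mem_if_meet_irreducible:
  assumes "finite A" "A \<noteq> {}" "A \<subseteq> Inc P le R"
    and "meet_irreducible (Inc P le R) (inc_le P) (pointwise_Min P A)"
  shows "pointwise_Min P A \<in> A"
  using assms
proof (induction A rule: finite_ne_induct)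
  case (singleton f)
  then show ?case using pointwise_Min_singleton by simp
next
  case (insert f F)
  let ?m = "pointwise_Min P (insert f F)"
  have "is_meet (Inc P le R) (inc_le P) ?m f (pointwise_Min P F)"
    unfolding is_meet_def
  proof (intro conjI ballI impI)
    show "?m \<in> Inc P le R" using insert pointwise_Min_Inc[of "insert f F"] by simp
    show "inc_le P ?m f" using insert by (simp add: pointwise_Min_le)
    show "inc_le P ?m (pointwise_Min P F)"
      using insert by (simp add: pointwise_Min_greatest pointwise_Min_le)
    fix g assume g: "inc_le P g f \<and> inc_le P g (pointwise_Min P F)"
    have "inc_le P g h" if "h \<in> insert f F" for h
      using that g inc_le_trans[OF _ pointwise_Min_le[OF insert.hyps(1)]] by auto
    then show "inc_le P g ?m" using insert.hyps(1) by (intro pointwise_Min_greatest) auto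
  qed
  moreover have "f \<in> Inc P le R" "pointwise_Min P F \<in> Inc P le R"
    using insert.prems(1) pointwise_Min_Inc[OF insert.hyps(1,2)] by auto
  ultimately have "?m = f \<or> ?m = pointwise_Min P F"
    using insert.prems(2) unfolding meet_irreducible_def by blast
  then show ?case using insert by auto
qed

locale finite_poset =
  fixes P :: "'a set" and le :: "'a \<Rightarrow> 'a \<Rightarrow> bool"
  assumes finite_P: "finite P" and poset: "poset_on P le"
begin

lemma le_refl: "x \<in> P \<Longrightarrow> le x x"
  using poset unfolding poset_on_def by blast

lemma le_antisym: "x \<in> P \<Longrightarrow> y \<in> P \<Longrightarrow> le x y \<Longrightarrow> le y x \<Longrightarrow> x = y"
  using poset unfolding poset_on_def by blast

lemma le_trans: "x \<in> P \<Longrightarrow> y \<in> P \<Longrightarrow> z \<in> P \<Longrightarrow> le x y \<Longrightarrow> le y z \<Longrightarrow> le x z"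
  using poset unfolding poset_on_def by blast

lemma covers_less: "covers P le x y \<Longrightarrow> x \<in> P \<and> y \<in> P \<and> le x y \<and> x \<noteq> y"
  by (simp add: covers_def)

lemma less_if_less_on_covers:
  fixes h :: "'a \<Rightarrow> 'b::order"
  assumes h: "\<And>x y. covers P le x y \<Longrightarrow> h x < h y"
  shows "x \<in> P \<Longrightarrow> y \<in> P \<Longrightarrow> le x y \<Longrightarrow> x \<noteq> y \<Longrightarrow> h x < h y"
proof (induction "card {w \<in> P. le x w \<and> le w y}" arbitrary: x y rule: less_induct)
  case less
  show ?case
  proof (cases "covers P le x y")
    case False
    then obtain z where z: "z \<in> P" "le x z" "x \<noteq> z" "le z y" "z \<noteq> y"
      using less.prems unfolding covers_def by blast
    have fin: "finite {w \<in> P. le x w \<and> le w y}" using finite_P by simp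
    have lower: "{w \<in> P. le x w \<and> le w z} \<subset> {w \<in> P. le x w \<and> le w y}"
      using z less.prems le_refl le_antisym[of y z] le_trans[of _ z y] by blast
    have upper: "{w \<in> P. le z w \<and> le w y} \<subset> {w \<in> P. le x w \<and> le w y}"
      using z less.prems le_refl le_antisym[of x z] le_trans[of x z] by blast
    have "h x < h z" using less.hyps psubset_card_mono[OF fin lower] z less.prems by blast
    also have "h z < h y" using less.hyps psubset_card_mono[OF fin upper] z less.prems by blast
    finally show ?thesis .
  qed (rule h)
qed

lemma Inc_intro:
  assumes "\<And>q. q \<in> P \<Longrightarrow> f q \<in> R q" "\<And>q. q \<notin> P \<Longrightarrow> f q = undefined"
    and "\<And>x y. covers P le x y \<Longrightarrow> f x < f y"
  shows "f \<in> Inc P le R"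
  using assms less_if_less_on_covers[of f] by (auto simp: Inc_def)

end

definition ideal_labeling :: "'a set \<Rightarrow> ('a \<Rightarrow> int set) \<Rightarrow> ('a \<times> int) set \<Rightarrow> 'a \<Rightarrow> int" where
  "ideal_labeling P R D =
     (\<lambda>q. if q \<in> P then Min (insert (Max (R q)) {k \<in> R q. (q, k) \<in> D}) else undefined)"

definition cone_labeling :: "'a set \<Rightarrow> ('a \<Rightarrow> 'a \<Rightarrow> bool) \<Rightarrow> ('a \<Rightarrow> int set) \<Rightarrow> 'a \<Rightarrow> int \<Rightarrow> 'a \<Rightarrow> int" where
  "cone_labeling P le R p k =
     (\<lambda>q. if q \<notin> P then undefined
          else if q = p then k
          else if le q p then Min (R q)
          else Max (R q))"

locale consistent_restriction = finite_poset +
  fixes R :: "'a \<Rightarrow> int set"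
  assumes restriction: "restriction_fun P R" and consistent: "consistent P le R"
begin

abbreviation "\<Gamma> \<equiv> Gamma_set P R"
abbreviation "L \<equiv> Inc P le R"
abbreviation "gle \<equiv> Gamma_le P le R"

lemma finite_R: "p \<in> P \<Longrightarrow> finite (R p)"
  using restriction by (simp add: restriction_fun_def)

lemma Max_R_in: "p \<in> P \<Longrightarrow> Max (R p) \<in> R p"
  and Min_R_in: "p \<in> P \<Longrightarrow> Min (R p) \<in> R p"
  using restriction by (auto simp: restriction_fun_def)

lemma le_Max_R: "p \<in> P \<Longrightarrow> k \<in> R p \<Longrightarrow> k \<le> Max (R p)"
  and Min_R_le: "p \<in> P \<Longrightarrow> k \<in> R p \<Longrightarrow> Min (R p) \<le> k"
  by (simp_all add: finite_R)

lemma Min_R_less: "x \<in> P \<Longrightarrow> y \<in> P \<Longrightarrow> le x y \<Longrightarrow> x \<noteq> y \<Longrightarrow> Min (R x) < Min (R y)"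
  and Max_R_less: "x \<in> P \<Longrightarrow> y \<in> P \<Longrightarrow> le x y \<Longrightarrow> x \<noteq> y \<Longrightarrow> Max (R x) < Max (R y)"
  using less_if_less_on_covers[of "\<lambda>p. Min (R p)"] less_if_less_on_covers[of "\<lambda>p. Max (R p)"]
    consistent by (auto simp: consistent_def)

lemma mem_Gamma_iff [simp]: "(p, k) \<in> \<Gamma> \<longleftrightarrow> p \<in> P \<and> k \<in> R p \<and> k \<noteq> Max (R p)"
  by (simp add: Gamma_set_def)

lemma Gamma_less_Max: "(p, k) \<in> \<Gamma> \<Longrightarrow> k < Max (R p)"
  using le_Max_R by fastforce

lemma Gamma_le_refl: "a \<in> \<Gamma> \<Longrightarrow> gle a a"
  by (simp add: Gamma_le_def)

lemma Gamma_le_trans: "gle a b \<Longrightarrow> gle b c \<Longrightarrow> gle a c"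
  unfolding Gamma_le_def by (meson rtranclp_trans)

lemma Gamma_le_if_cover: "Gamma_cover P le R a b \<Longrightarrow> gle a b"
  unfolding Gamma_le_def Gamma_cover_def by blast

lemma Gamma_le_in_fibre: "(q, k) \<in> \<Gamma> \<Longrightarrow> (q, k') \<in> \<Gamma> \<Longrightarrow> k \<le> k' \<Longrightarrow> gle (q, k') (q, k)"
proof (induction "nat (k' - k)" arbitrary: k rule: less_induct)
  case less
  show ?case
  proof (cases "k = k'")
    case True
    then show ?thesis using less.prems Gamma_le_refl by simp
  next
    case False
    define s where "s = succ_in (R q) k"
    have k': "q \<in> P" "k' \<in> R q" "k < k'" "k' < Max (R q)"
      using less.prems False Gamma_less_Max by auto
    have s: "s \<in> R q" "k < s" "s \<le> k'"
      using succ_in_mem[of "R q" k' k] succ_in_greater[of "R q" k' k] succ_in_le[of "R q" k' k]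
        k' finite_R unfolding s_def by auto
    have "gle (q, k') (q, s)" using less.hyps[of s] s k' less.prems by auto
    moreover have "Gamma_cover P le R (q, s) (q, k)"
      using less.prems s k' by (simp add: Gamma_cover_def s_def)
    ultimately show ?thesis using Gamma_le_if_cover Gamma_le_trans by blast
  qed
qed

lemma Gamma_path_label_bound:
  "(Gamma_cover P le R)\<^sup>*\<^sup>* a b \<Longrightarrow> f \<in> L \<Longrightarrow> f (fst b) \<le> snd b \<Longrightarrow> f (fst a) \<le> snd a"
proof (induction rule: converse_rtranclp_induct)
  case (step a c)
  obtain p1 k1 p2 k2 where ac: "a = (p1, k1)" "c = (p2, k2)" by fastforce
  have IH: "f p2 \<le> k2" using step ac by simp
  from step.hyps(1) consider
      "p1 = p2" "succ_in (R p1) k2 = k1" "(p2, k2) \<in> \<Gamma>"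
    | "covers P le p1 p2" "{x \<in> R p1. x < k2} \<noteq> {}" "k1 = pred_in (R p1) k2"
    unfolding ac Gamma_cover_def by auto
  then show ?case
  proof cases
    case 1
    then show ?thesis using succ_in_greater[of "R p2" "Max (R p2)" k2] Max_R_in finite_R
        Gamma_less_Max IH ac by fastforce
  next
    case 2
    then have p: "p1 \<in> P" "p2 \<in> P" "le p1 p2" "p1 \<noteq> p2" using covers_less by auto
    have "f p1 < f p2" "f p1 \<in> R p1"
      using Inc_less[OF step.prems(1) p] Inc_in_R[OF step.prems(1) p(1)] .
    then show ?thesis using pred_in_ge[OF finite_R[OF p(1)], of "f p1" k2] IH 2 ac by simp
  qed
qed simp

lemma ideal_labeling_in_R: "q \<in> P \<Longrightarrow> ideal_labeling P R D q \<in> R q"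
  and ideal_labeling_cases:
    "q \<in> P \<Longrightarrow> ideal_labeling P R D q = Max (R q) \<or> (q, ideal_labeling P R D q) \<in> D"
  using Min_in[of "insert (Max (R q)) {k \<in> R q. (q, k) \<in> D}"] finite_R Max_R_in
  by (auto simp: ideal_labeling_def)

lemma ideal_labeling_le_Max: "q \<in> P \<Longrightarrow> ideal_labeling P R D q \<le> Max (R q)"
  and ideal_labeling_le: "(q, k) \<in> D \<Longrightarrow> D \<subseteq> \<Gamma> \<Longrightarrow> ideal_labeling P R D q \<le> k"
  using finite_R by (auto simp: ideal_labeling_def)

lemma order_idealD: "D \<in> order_ideals \<Gamma> gle \<Longrightarrow> D \<subseteq> \<Gamma>"
  "D \<in> order_ideals \<Gamma> gle \<Longrightarrow> a \<in> D \<Longrightarrow> b \<in> \<Gamma> \<Longrightarrow> gle b a \<Longrightarrow> b \<in> D"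
  by (auto simp: order_ideals_def)

lemma mem_order_ideal_iff:
  assumes D: "D \<in> order_ideals \<Gamma> gle" and qk: "(q, k) \<in> \<Gamma>"
  shows "(q, k) \<in> D \<longleftrightarrow> ideal_labeling P R D q \<le> k"
proof
  assume "ideal_labeling P R D q \<le> k"
  moreover have "(q, ideal_labeling P R D q) \<in> D"
    using ideal_labeling_cases[of q D] Gamma_less_Max qk calculation by fastforce
  ultimately show "(q, k) \<in> D"
    using Gamma_le_in_fibre qk order_idealD[OF D] by blast
qed (use ideal_labeling_le order_idealD(1)[OF D] in blast)

text \<open>The covering relation of \<open>\<Gamma>(P,R)\<close> that forces \<open>(p1, j)\<close> into the ideal, for
  \<open>j = R(p1)\<^sub><\<^sub>k\<^sub>2\<close>, is \<open>(p1, j) \<lessdot> (p2, ks)\<close> with \<open>ks\<close> the largest \<open>k \<ge> k2\<close> in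
  \<open>R(p2)\<close> with \<open>R(p1)\<^sub><\<^sub>k = j\<close>; \<open>(p2, ks)\<close> lies in the ideal because it is below
  \<open>(p2, k2)\<close>.\<close>

lemma order_ideal_pred_in_cover:
  assumes D: "D \<in> order_ideals \<Gamma> gle" and cv: "covers P le p1 p2"
    and k2: "(p2, k2) \<in> D" and j: "pred_in (R p1) k2 \<noteq> Max (R p1)"
  shows "(p1, pred_in (R p1) k2) \<in> D"
proof -
  let ?j = "pred_in (R p1) k2"
  have p: "p1 \<in> P" "p2 \<in> P" "le p1 p2" "p1 \<noteq> p2" using covers_less[OF cv] by auto
  have k2R: "k2 \<in> R p2" using k2 order_idealD(1)[OF D] by auto
  have ne: "Min (R p1) < k2" using Min_R_less[OF p] Min_R_le[OF p(2) k2R] by simp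
  have j_in: "?j \<in> R p1" using pred_in_mem[OF finite_R Min_R_in] p ne by blast
  define K where "K = {k \<in> R p2. k2 \<le> k \<and> pred_in (R p1) k = ?j}"
  define ks where "ks = Max K"
  have finK: "finite K" using finite_R[OF p(2)] K_def by auto
  have ksK: "ks \<in> K" using Max_in[OF finK] k2R K_def ks_def by auto
  have ks_max: "\<And>k. k \<in> K \<Longrightarrow> k \<le> ks" using finK ks_def by auto
  have "ks \<noteq> Max (R p2)"
  proof
    assume "ks = Max (R p2)"
    then have "pred_in (R p1) (Max (R p2)) = ?j" using ksK K_def by auto
    moreover have "Max (R p1) \<le> pred_in (R p1) (Max (R p2))"
      using pred_in_ge[OF finite_R Max_R_in] Max_R_less[OF p] p(1) by blast
    ultimately show False using j le_Max_R[OF p(1) j_in] by simp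
  qed
  then have ks_Gamma: "(p2, ks) \<in> \<Gamma>" using ksK K_def p by auto
  have "\<not> (\<exists>k\<in>R p2. ks < k \<and> pred_in (R p1) k = ?j)"
    using ks_max ksK by (force simp: K_def)
  moreover have "{x \<in> R p1. x < ks} \<noteq> {}" "pred_in (R p1) ks = ?j"
    using ksK ne Min_R_in[OF p(1)] by (auto simp: K_def)
  ultimately have "Gamma_cover P le R (p1, ?j) (p2, ks)"
    using ks_Gamma cv j j_in p(1) by (simp add: Gamma_cover_def)
  moreover have "(p2, ks) \<in> D"
    using Gamma_le_in_fibre[of p2 k2 ks] order_idealD[OF D] k2 ks_Gamma ksK
    by (auto simp: K_def)
  ultimately show ?thesis
    using order_idealD(2)[OF D] Gamma_le_if_cover j j_in p(1) by fastforce
qed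

lemma ideal_labeling_Inc:
  assumes D: "D \<in> order_ideals \<Gamma> gle"
  shows "ideal_labeling P R D \<in> L"
proof (rule Inc_intro)
  fix p1 p2 assume cv: "covers P le p1 p2"
  then have p: "p1 \<in> P" "p2 \<in> P" "le p1 p2" "p1 \<noteq> p2" using covers_less by auto
  let ?k2 = "ideal_labeling P R D p2" and ?j = "pred_in (R p1) (ideal_labeling P R D p2)"
  consider "?k2 = Max (R p2)" | "(p2, ?k2) \<in> D" using ideal_labeling_cases[OF p(2)] by blast
  then show "ideal_labeling P R D p1 < ?k2"
  proof cases
    case 1
    then show ?thesis using ideal_labeling_le_Max[OF p(1), of D] Max_R_less[OF p] by simp
  next
    case 2
    have "Min (R p1) < ?k2"
      using Min_R_less[OF p] Min_R_le[OF p(2) ideal_labeling_in_R[OF p(2), of D]] by simp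
    then have j: "?j < ?k2" using pred_in_less[OF finite_R Min_R_in] p(1) by blast
    have "ideal_labeling P R D p1 \<le> ?j"
    proof (cases "?j = Max (R p1)")
      case True
      then show ?thesis using ideal_labeling_le_Max[OF p(1)] by simp
    next
      case False
      then show ?thesis
        using order_ideal_pred_in_cover[OF D cv 2] ideal_labeling_le order_idealD(1)[OF D] by blast
    qed
    then show ?thesis using j by simp
  qed
qed (use ideal_labeling_in_R in \<open>auto simp: ideal_labeling_def\<close>)

definition label_ideal :: "('a \<Rightarrow> int) \<Rightarrow> ('a \<times> int) set" where
  "label_ideal f = {c \<in> \<Gamma>. f (fst c) \<le> snd c}"

lemma label_ideal_order_ideal: "f \<in> L \<Longrightarrow> label_ideal f \<in> order_ideals \<Gamma> gle"
  using Gamma_path_label_bound by (auto simp: order_ideals_def label_ideal_def Gamma_le_def)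

lemma ideal_labeling_label_ideal:
  assumes f: "f \<in> L"
  shows "ideal_labeling P R (label_ideal f) = f"
proof
  fix q
  show "ideal_labeling P R (label_ideal f) q = f q"
  proof (cases "q \<in> P")
    case True
    then have "Min (insert (Max (R q)) {k \<in> R q. (q, k) \<in> label_ideal f}) = f q"
      using Inc_in_R[OF f True] le_Max_R finite_R by (intro Min_eqI) (auto simp: label_ideal_def)
    then show ?thesis using True by (simp add: ideal_labeling_def)
  qed (simp add: Inc_undefined[OF f] ideal_labeling_def)
qed

lemma label_ideal_ideal_labeling:
  assumes D: "D \<in> order_ideals \<Gamma> gle"
  shows "label_ideal (ideal_labeling P R D) = D"
proof (intro set_eqI)
  fix c :: "'a \<times> int"
  obtain q k where c: "c = (q, k)" by fastforce
  show "c \<in> label_ideal (ideal_labeling P R D) \<longleftrightarrow> c \<in> D"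
    using order_idealD(1)[OF D] mem_order_ideal_iff[OF D, of q k]
    unfolding c label_ideal_def by auto
qed

lemma bij_betw_ideal_labeling: "bij_betw (ideal_labeling P R) (order_ideals \<Gamma> gle) L"
  by (rule bij_betw_byWitness[where f' = label_ideal])
    (auto simp: label_ideal_ideal_labeling ideal_labeling_label_ideal
      ideal_labeling_Inc label_ideal_order_ideal)

lemma ideal_labeling_le_iff:
  assumes D: "D \<in> order_ideals \<Gamma> gle" and D': "D' \<in> order_ideals \<Gamma> gle"
  shows "inc_le P (ideal_labeling P R D) (ideal_labeling P R D') \<longleftrightarrow> D' \<subseteq> D"
proof
  assume le: "inc_le P (ideal_labeling P R D) (ideal_labeling P R D')"
  show "D' \<subseteq> D"
  proof (clarify)
    fix q k assume "(q, k) \<in> D'"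
    moreover have "(q, k) \<in> \<Gamma>" using calculation order_idealD(1)[OF D'] by auto
    ultimately show "(q, k) \<in> D"
      using le mem_order_ideal_iff[OF D] mem_order_ideal_iff[OF D'] order_trans
      by (fastforce simp: inc_le_def)
  qed
next
  assume "D' \<subseteq> D"
  then show "inc_le P (ideal_labeling P R D) (ideal_labeling P R D')"
    using finite_R by (auto simp: inc_le_def ideal_labeling_def intro!: Min_antimono)
qed

lemma principal_ideal_order_ideal: "{a \<in> \<Gamma>. gle a b} \<in> order_ideals \<Gamma> gle"
  unfolding order_ideals_def using Gamma_le_trans by blast

lemma principal_ideal_subset_iff: "a \<in> \<Gamma> \<Longrightarrow> {c \<in> \<Gamma>. gle c a} \<subseteq> {c \<in> \<Gamma>. gle c b} \<longleftrightarrow> gle a b"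
  using Gamma_le_refl Gamma_le_trans by blast

definition principal_labeling :: "'a \<times> int \<Rightarrow> 'a \<Rightarrow> int" where
  "principal_labeling b = ideal_labeling P R {a \<in> \<Gamma>. gle a b}"

lemma principal_labeling_Inc: "principal_labeling b \<in> L"
  unfolding principal_labeling_def by (rule ideal_labeling_Inc[OF principal_ideal_order_ideal])

lemma principal_labeling_le_iff:
  "a \<in> \<Gamma> \<Longrightarrow> inc_le P (principal_labeling b) (principal_labeling a) \<longleftrightarrow> gle a b"
  unfolding principal_labeling_def
  by (simp add: ideal_labeling_le_iff principal_ideal_order_ideal principal_ideal_subset_iff)

lemma le_principal_labeling_iff:
  assumes b: "(p, k) \<in> \<Gamma>" and f: "f \<in> L"
  shows "inc_le P f (principal_labeling (p, k)) \<longleftrightarrow> f p \<le> k"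
proof -
  have "inc_le P f (principal_labeling (p, k)) \<longleftrightarrow> {a \<in> \<Gamma>. gle a (p, k)} \<subseteq> label_ideal f"
    using ideal_labeling_le_iff[OF label_ideal_order_ideal[OF f] principal_ideal_order_ideal]
    by (simp add: ideal_labeling_label_ideal[OF f] principal_labeling_def)
  also have "\<dots> \<longleftrightarrow> (p, k) \<in> label_ideal f"
    using b Gamma_le_refl order_idealD(2)[OF label_ideal_order_ideal[OF f]] by blast
  also have "\<dots> \<longleftrightarrow> f p \<le> k"
    using b by (simp add: label_ideal_def)
  finally show ?thesis .
qed

lemma principal_labeling_at: "(p, k) \<in> \<Gamma> \<Longrightarrow> principal_labeling (p, k) p \<le> k"
  using le_principal_labeling_iff[OF _ principal_labeling_Inc] inc_le_refl by blast

lemma cone_labeling_at: "p \<in> P \<Longrightarrow> cone_labeling P le R p k p = k"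
  by (simp add: cone_labeling_def)

lemma cone_labeling_Inc:
  assumes p: "p \<in> P" "k \<in> R p"
  shows "cone_labeling P le R p k \<in> L"
proof (rule Inc_intro)
  have in_R: "cone_labeling P le R p k q \<in> R q" if "q \<in> P" for q
    using that p Min_R_in Max_R_in by (simp add: cone_labeling_def)
  then show "\<And>q. q \<in> P \<Longrightarrow> cone_labeling P le R p k q \<in> R q" .
  fix x y assume "covers P le x y"
  then have xy: "x \<in> P" "y \<in> P" "le x y" "x \<noteq> y" using covers_less by auto
  consider "y = p" | "y \<noteq> p" "le y p" | "\<not> le y p" by blast
  then show "cone_labeling P le R p k x < cone_labeling P le R p k y"
  proof cases
    case 1
    then show ?thesis using Min_R_less[OF xy] Min_R_le[OF p] xy by (simp add: cone_labeling_def)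
  next
    case 2
    then have "x \<noteq> p" "le x p" using xy le_antisym le_trans[OF xy(1,2) p(1)] by blast+
    then show ?thesis using 2 Min_R_less[OF xy] xy by (simp add: cone_labeling_def)
  next
    case 3
    have "cone_labeling P le R p k x \<le> Max (R x)" using le_Max_R[OF xy(1) in_R[OF xy(1)]] .
    also have "\<dots> < Max (R y)" using Max_R_less[OF xy] .
    finally show ?thesis using 3 xy le_refl p(1) by (auto simp: cone_labeling_def)
  qed
qed (simp add: cone_labeling_def)

lemma inj_on_principal_labeling: "inj_on principal_labeling \<Gamma>"
proof -
  have below: "le p' p \<and> (p' = p \<longrightarrow> k \<le> k')"
    if a: "(p, k) \<in> \<Gamma>" and b: "(p', k') \<in> \<Gamma>"
      and eq: "principal_labeling (p, k) = principal_labeling (p', k')" for p k p' k'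
  proof -
    let ?w = "cone_labeling P le R p k"
    have w: "?w \<in> L" using a cone_labeling_Inc by simp
    then have "inc_le P ?w (principal_labeling (p', k'))"
      using le_principal_labeling_iff[OF a] eq a cone_labeling_at by simp
    then have "?w p' \<le> k'" using le_principal_labeling_iff[OF b w] by simp
    then show ?thesis
      using a b Gamma_less_Max[OF b] le_refl by (auto simp: cone_labeling_def split: if_splits)
  qed
  show ?thesis
  proof (rule inj_onI)
    fix a b assume ab: "a \<in> \<Gamma>" "b \<in> \<Gamma>" "principal_labeling a = principal_labeling b"
    obtain p k p' k' where a: "a = (p, k)" and b: "b = (p', k')" by fastforce
    have "le p' p \<and> (p' = p \<longrightarrow> k \<le> k')" "le p p' \<and> (p = p' \<longrightarrow> k' \<le> k)"
      using below ab unfolding a b by metis+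
    moreover have "p \<in> P" "p' \<in> P" using ab unfolding a b by auto
    ultimately show "a = b" using le_antisym unfolding a b by force
  qed
qed

lemma meet_irreducible_principal_labeling:
  assumes b: "(p, k) \<in> \<Gamma>"
  shows "meet_irreducible L (inc_le P) (principal_labeling (p, k))"
  unfolding meet_irreducible_def
proof (intro conjI ballI impI principal_labeling_Inc)
  let ?\<phi> = "principal_labeling (p, k)"
  let ?w = "cone_labeling P le R p (Max (R p))"
  have w: "?w \<in> L" using b cone_labeling_Inc Max_R_in by simp
  moreover have "\<not> inc_le P ?w ?\<phi>"
    using le_principal_labeling_iff[OF b w] b cone_labeling_at Gamma_less_Max[OF b] by simp
  ultimately show "\<exists>y\<in>L. \<not> inc_le P y ?\<phi>" by blast
  fix y z assume y: "y \<in> L" and z: "z \<in> L" and meet: "is_meet L (inc_le P) ?\<phi> y z"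
  have "pointwise_Min P {y, z} \<in> L" using pointwise_Min_Inc[of "{y, z}"] y z by simp
  then have "inc_le P (pointwise_Min P {y, z}) ?\<phi>"
    using meet pointwise_Min_le[of "{y, z}"] unfolding is_meet_def by auto
  then have "min (y p) (z p) \<le> k"
    using le_principal_labeling_iff[OF b] \<open>pointwise_Min P {y, z} \<in> L\<close> b
    by (simp add: pointwise_Min_def)
  then have "inc_le P y ?\<phi> \<or> inc_le P z ?\<phi>"
    using le_principal_labeling_iff[OF b y] le_principal_labeling_iff[OF b z] by linarith
  moreover have "inc_le P ?\<phi> y" "inc_le P ?\<phi> z" using meet unfolding is_meet_def by auto
  ultimately show "?\<phi> = y \<or> ?\<phi> = z"
    using Inc_inc_le_antisym principal_labeling_Inc y z by blast
qed

lemma meet_irreducible_imp_principal_labeling: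
  assumes m: "meet_irreducible L (inc_le P) m"
  shows "m \<in> principal_labeling ` \<Gamma>"
proof -
  have mL: "m \<in> L" using m by (simp add: meet_irreducible_def)
  define Q where "Q = {q \<in> P. m q \<noteq> Max (R q)}"
  define A where "A = (\<lambda>q. principal_labeling (q, m q)) ` Q"
  have Q_Gamma: "(q, m q) \<in> \<Gamma>" if "q \<in> Q" for q
    using that Inc_in_R[OF mL] by (simp add: Q_def)
  obtain y q0 where y: "y \<in> L" "q0 \<in> P" "m q0 < y q0"
    using m by (force simp: meet_irreducible_def inc_le_def)
  then have "q0 \<in> Q" using le_Max_R[OF y(2) Inc_in_R[OF y(1,2)]] by (simp add: Q_def)
  then have A: "finite A" "A \<noteq> {}" "A \<subseteq> L"
    using finite_P principal_labeling_Inc by (auto simp: A_def Q_def)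
  have "pointwise_Min P A = m"
  proof (rule Inc_inc_le_antisym[OF pointwise_Min_Inc[OF A] mL])
    show "inc_le P m (pointwise_Min P A)"
      using A Q_Gamma le_principal_labeling_iff[OF _ mL]
      by (intro pointwise_Min_greatest) (auto simp: A_def)
    show "inc_le P (pointwise_Min P A) m"
      unfolding inc_le_def
    proof
      fix q assume q: "q \<in> P"
      show "pointwise_Min P A q \<le> m q"
      proof (cases "q \<in> Q")
        case True
        then have "pointwise_Min P A q \<le> principal_labeling (q, m q) q"
          using pointwise_Min_le[OF A(1)] q by (force simp: A_def inc_le_def)
        also have "\<dots> \<le> m q" using principal_labeling_at Q_Gamma True by blast
        finally show ?thesis .
      next
        case False
        then show ?thesis
          using q Inc_in_R[OF pointwise_Min_Inc[OF A] q] le_Max_R by (simp add: Q_def)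
      qed
    qed
  qed
  then have "m \<in> A" using pointwise_Min_mem_if_meet_irreducible[OF A] m by simp
  then show ?thesis using Q_Gamma by (auto simp: A_def)
qed

lemma bij_betw_principal_labeling:
  "bij_betw principal_labeling \<Gamma> {f. meet_irreducible L (inc_le P) f}"
  unfolding bij_betw_def
  using inj_on_principal_labeling meet_irreducible_principal_labeling
    meet_irreducible_imp_principal_labeling by auto

end

theorem theorem2p14:
  fixes P :: "'a set" and le :: "'a \<Rightarrow> 'a \<Rightarrow> bool" and R :: "'a \<Rightarrow> int set"
  assumes "finite P" and "poset_on P le" and "restriction_fun P R" and "consistent P le R"
  shows "(\<exists>\<phi>. bij_betw \<phi> (Gamma_set P R) {f. meet_irreducible (Inc P le R) (inc_le P) f} \<and>
            (\<forall>a\<in>Gamma_set P R. \<forall>b\<in>Gamma_set P R.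
               Gamma_le P le R a b \<longleftrightarrow> inc_le P (\<phi> b) (\<phi> a)))
       \<and> (\<exists>g. bij_betw g (order_ideals (Gamma_set P R) (Gamma_le P le R)) (Inc P le R))"
proof -
  interpret consistent_restriction P le R
    using assms by unfold_locales
  show ?thesis
    using bij_betw_principal_labeling principal_labeling_le_iff bij_betw_ideal_labeling by blast
qed

end
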